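(* In the standard LLP setup, for every $N\ge1$: $L(G,\gamma^{N+1}_{cons})\supseteq L(G,\gamma^N_{cons})$.
   Context: Standard LLP setup. $\Sigma=\Sigma_c\,\dot\cup\,\Sigma_{uc}$ is a finite alphabet partitioned into controllable and uncontrollable events. The plant $G$ has generated language $L(G)$ and marked language $L_m(G)$ with $L(G)=\overline{L_m(G)}$ ($\overline{M}$ = set of prefixes of strings in $M$). The legal language $K\subseteq L_m(G)$ satisfies $K=\overline{K}\cap L_m(G)$. For a prefix-closed $L$, $M$ is controllable w.r.t. $L$ if $\overline{M}\Sigma_{uc}\cap L\subseteq\overline{M}$. For a language $L$ and $s\in\Sigma^*$: $L/s=\{t: st\in L\}$; $L|_N=\{t\in L:|t|\le N\}$; $\Sigma_{L(G)}(s)=\{\sigma\in\Sigma: s\sigma\in L(G)\}$. $M^{\uparrow/s|_N}$ is the supremal sublanguage of $M$ controllable w.r.t. $L(G)/s|_N$. Conservative attitude: $f^N_{cons}(s)=[K/s|_{N-1}]^{\uparrow/s|_N}$; control policy $\gamma^N_{cons}(s)=(\overline{f^N_{cons}(s)}\cap\Sigma)\cup(\Sigma_{uc}\cap\Sigma_{L(G)}(s))$. Closed-loop language $L(G,\gamma)$: $\epsilon\in L(G,\gamma)$, and $s\sigma\in L(G,\gamma)$ iff $s\in L(G,\gamma)$, $s\sigma\in L(G)$, $\sigma\in\gamma(s)$. *)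

theory Defs
  imports Main
begin

definition pre :: "'a list set \<Rightarrow> 'a list set" where
  "pre M = {s. \<exists>t. s @ t \<in> M}"

definition quot :: "'a list set \<Rightarrow> 'a list \<Rightarrow> 'a list set" where
  "quot L s = {t. s @ t \<in> L}"

definition trunc :: "'a list set \<Rightarrow> nat \<Rightarrow> 'a list set" where
  "trunc L N = {t \<in> L. length t \<le> N}"

definition enabled :: "'a list set \<Rightarrow> 'a list \<Rightarrow> 'a set" where
  "enabled L s = {\<sigma>. s @ [\<sigma>] \<in> L}"

definition controllable :: "'a set \<Rightarrow> 'a list set \<Rightarrow> 'a list set \<Rightarrow> bool" where
  "controllable Suc' L M \<longleftrightarrow>
     (\<forall>s \<in> pre M. \<forall>\<sigma> \<in> Suc'. s @ [\<sigma>] \<in> L \<longrightarrow> s @ [\<sigma>] \<in> pre M)"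

definition supcon :: "'a set \<Rightarrow> 'a list set \<Rightarrow> 'a list set \<Rightarrow> 'a list set" where
  "supcon Suc' L M = \<Union>{M'. M' \<subseteq> M \<and> controllable Suc' L M'}"

definition f_cons :: "'a set \<Rightarrow> 'a list set \<Rightarrow> 'a list set \<Rightarrow> nat \<Rightarrow> 'a list \<Rightarrow> 'a list set" where
  "f_cons Suc' LG K N s = supcon Suc' (trunc (quot LG s) N) (trunc (quot K s) (N - 1))"

definition gamma_cons :: "'a set \<Rightarrow> 'a set \<Rightarrow> 'a list set \<Rightarrow> 'a list set \<Rightarrow> nat \<Rightarrow> 'a list \<Rightarrow> 'a set" where
  "gamma_cons Sig Suc' LG K N s =
     {\<sigma> \<in> Sig. [\<sigma>] \<in> pre (f_cons Suc' LG K N s)} \<union> (Suc' \<inter> enabled LG s)"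

inductive_set closed_loop :: "'a list set \<Rightarrow> ('a list \<Rightarrow> 'a set) \<Rightarrow> 'a list set"
  for LG :: "'a list set" and \<gamma> :: "'a list \<Rightarrow> 'a set" where
  eps: "[] \<in> closed_loop LG \<gamma>"
| step: "s \<in> closed_loop LG \<gamma> \<Longrightarrow> s @ [\<sigma>] \<in> LG \<Longrightarrow> \<sigma> \<in> \<gamma> s \<Longrightarrow> s @ [\<sigma>] \<in> closed_loop LG \<gamma>"

end

theory Submission
  imports Defs
begin

text \<open>A candidate for the supremal controllable sublanguage at horizon N consists of strings of
  length at most N - 1; for such short strings every one-event extension already lies within the
  horizon N, so controllability does not depend on how far the truncated plant language reaches.
  Hence every candidate at horizon N remains one at horizon N + 1, the conservative control policy
  grows with N, and so does the closed-loop language.\<close>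

lemma pre_mono: "A \<subseteq> B \<Longrightarrow> pre A \<subseteq> pre B"
  unfolding pre_def by auto

lemma controllable_antimono:
  "L \<subseteq> L' \<Longrightarrow> controllable S L' M \<Longrightarrow> controllable S L M"
  unfolding controllable_def by blast

lemma controllable_trunc_imp_controllable:
  assumes short: "\<forall>t \<in> M. length t < N" and ctrl: "controllable S (trunc L N) M"
  shows "controllable S L M"
  unfolding controllable_def
proof (intro ballI impI)
  fix s \<sigma> assume s: "s \<in> pre M" and \<sigma>: "\<sigma> \<in> S" and s\<sigma>: "s @ [\<sigma>] \<in> L"
  from s obtain t where "s @ t \<in> M" unfolding pre_def by auto
  with short have "length (s @ [\<sigma>]) \<le> N" by fastforce
  with s\<sigma> have "s @ [\<sigma>] \<in> trunc L N" unfolding trunc_def by auto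
  with ctrl s \<sigma> show "s @ [\<sigma>] \<in> pre M" unfolding controllable_def by blast
qed

lemma f_cons_mono_Suc:
  assumes "N \<ge> 1"
  shows "f_cons S LG K N s \<subseteq> f_cons S LG K (Suc N) s"
proof
  fix x assume "x \<in> f_cons S LG K N s"
  then obtain M where x: "x \<in> M" and M: "M \<subseteq> trunc (quot K s) (N - 1)"
    and ctrl: "controllable S (trunc (quot LG s) N) M"
    unfolding f_cons_def supcon_def by auto
  have "\<forall>t \<in> M. length t < N" using M assms unfolding trunc_def by auto
  with ctrl have "controllable S (quot LG s) M"
    by (rule controllable_trunc_imp_controllable[rotated])
  then have "controllable S (trunc (quot LG s) (Suc N)) M"
    by (rule controllable_antimono[rotated]) (auto simp: trunc_def)
  moreover have "M \<subseteq> trunc (quot K s) (Suc N - 1)"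
    using M unfolding trunc_def by auto
  ultimately show "x \<in> f_cons S LG K (Suc N) s"
    using x unfolding f_cons_def supcon_def by auto
qed

lemma gamma_cons_mono_Suc:
  assumes "N \<ge> 1"
  shows "gamma_cons Sig S LG K N s \<subseteq> gamma_cons Sig S LG K (Suc N) s"
  using pre_mono[OF f_cons_mono_Suc[OF assms, of S LG K s]] unfolding gamma_cons_def by auto

lemma closed_loop_mono:
  assumes "\<And>s. \<gamma> s \<subseteq> \<gamma>' s"
  shows "closed_loop LG \<gamma> \<subseteq> closed_loop LG \<gamma>'"
proof
  fix s assume "s \<in> closed_loop LG \<gamma>"
  then show "s \<in> closed_loop LG \<gamma>'"
  proof induction
    case eps
    show ?case by (rule closed_loop.eps)
  next
    case (step s \<sigma>)
    then show ?case using assms by (blast intro: closed_loop.step)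
  qed
qed

theorem theorem5:
  fixes Sc Suc' :: "'a set" and Lm K :: "'a list set" and N :: nat
  assumes "finite (Sc \<union> Suc')"
    and "Sc \<inter> Suc' = {}"
    and "Lm \<subseteq> lists (Sc \<union> Suc')"
    and "K \<subseteq> Lm"
    and "K = pre K \<inter> Lm"
    and "N \<ge> 1"
  shows "closed_loop (pre Lm) (gamma_cons (Sc \<union> Suc') Suc' (pre Lm) K N)
         \<subseteq> closed_loop (pre Lm) (gamma_cons (Sc \<union> Suc') Suc' (pre Lm) K (Suc N))"
  by (rule closed_loop_mono[OF gamma_cons_mono_Suc[OF \<open>N \<ge> 1\<close>]])

end
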